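(* Let the universe be $\mathbb{Z}$ and let $\mathcal{C}=\{\mathbb{Z}\setminus\{i\}\}_{i\in\mathbb{Z}}$. There is no algorithm that non-uniformly generates from $\mathcal{C}$ and whose generation times form a Pareto-optimal sequence.
   Context: Index the languages of $\mathcal{C}$ as $L_1,L_2,\ldots$ by any enumeration without repetition. An enumeration of a language $L$ is a sequence $x_1,x_2,\ldots$ with every $x_t\in L$ and every $x\in L$ equal to some $x_t$. A generating algorithm at each time $t\ge1$ receives $x_1,\ldots,x_t$ and outputs $z_t$; $S_t$ is the set of distinct strings among $x_1,\ldots,x_t$. An algorithm $\mathcal{G}$ non-uniformly generates from $\mathcal{C}$ if for every $i$ there is a finite $t(L_i)$ such that for every enumeration of $L_i$, $z_t\in L_i\setminus S_t$ whenever $|S_t|\ge t(L_i)$; its generation time $t_{\mathcal{G}}(L_i)$ is the least such value ($\infty$ if none). A sequence $t(L_1),t(L_2),\ldots$ is Pareto-optimal if every algorithm $\mathcal{G}$ that non-uniformly generates from $\mathcal{C}$ and satisfies $t_{\mathcal{G}}(L_i)<t(L_i)$ for some $i$ also satisfies $t_{\mathcal{G}}(L_j)>t(L_j)$ for some other $j$. *)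

theory Defs
  imports Main "HOL-Library.Extended_Nat"
begin

text \<open>An algorithm is an arbitrary function from the finite prefix
  x_1,...,x_t (a nonempty list) to an output string z_t.
  An enumeration of L is a sequence x :: nat => 'a (x 0 plays the role of x_1)
  whose range is exactly L.  At time t >= 1 the algorithm sees
  map x [0..<t] and S_t = x ` {..<t}.\<close>

definition is_enumeration :: "(nat \<Rightarrow> 'a) \<Rightarrow> 'a set \<Rightarrow> bool" where
  "is_enumeration x L \<longleftrightarrow> range x = L"

definition gen_bound :: "('a list \<Rightarrow> 'a) \<Rightarrow> 'a set \<Rightarrow> nat \<Rightarrow> bool" where
  "gen_bound G L T \<longleftrightarrow>
     (\<forall>x. is_enumeration x L \<longrightarrow>
        (\<forall>t\<ge>1. card (x ` {..<t}) \<ge> T \<longrightarrow> G (map x [0..<t]) \<in> L - x ` {..<t}))"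

definition gen_time :: "('a list \<Rightarrow> 'a) \<Rightarrow> 'a set \<Rightarrow> enat" where
  "gen_time G L = (if \<exists>T. gen_bound G L T then enat (LEAST T. gen_bound G L T) else \<infinity>)"

definition nonuniform_generates :: "('a list \<Rightarrow> 'a) \<Rightarrow> (nat \<Rightarrow> 'a set) \<Rightarrow> bool" where
  "nonuniform_generates G Lf \<longleftrightarrow> (\<forall>i. \<exists>T. gen_bound G (Lf i) T)"

definition pareto_optimal :: "(nat \<Rightarrow> 'a set) \<Rightarrow> (nat \<Rightarrow> enat) \<Rightarrow> bool" where
  "pareto_optimal Lf tt \<longleftrightarrow>
     (\<forall>G i. nonuniform_generates G Lf \<and> gen_time G (Lf i) < tt i \<longrightarrow>
        (\<exists>j. j \<noteq> i \<and> gen_time G (Lf j) > tt j))"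

end

theory Submission
  imports Defs "HOL-Library.Countable"
begin

text \<open>An adversary that first lists a finite set \<open>W\<close> and then the rest of
  \<open>\<int> - {z}\<close>, with \<open>z \<notin> W\<close> chosen after seeing the algorithm's answer on \<open>W\<close>,
  defeats every generator on the prefix \<open>W\<close>; so for each \<open>W\<close> some language
  \<open>\<int> - {z}\<close> has generation time exceeding \<open>|W|\<close>. Given any generator with
  generation times \<open>t\<close>, pick \<open>a\<close> with \<open>t(a) \<ge> 2\<close> and modify the generator on
  prefixes of size \<open>t(a) - 1\<close> avoiding \<open>a\<close>: it then outputs an unseen \<open>z \<noteq> a\<close>
  whose time exceeds the prefix size. This lowers the time on \<open>\<int> - {a}\<close> by one
  and raises no other time, so the original times were not Pareto-optimal.\<close>

lemma gen_time_le: "gen_bound G L T \<Longrightarrow> gen_time G L \<le> enat T"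
  unfolding gen_time_def by (auto intro: Least_le)

lemma gen_time_attained:
  assumes "gen_bound G L T"
  obtains n where "gen_time G L = enat n" and "gen_bound G L n"
proof -
  have "gen_bound G L (LEAST T. gen_bound G L T)"
    using assms by (rule LeastI)
  moreover have "gen_time G L = enat (LEAST T. gen_bound G L T)"
    using assms unfolding gen_time_def by auto
  ultimately show ?thesis
    using that by blast
qed

lemma is_enumeration_with_prefix:
  fixes xs :: "'a::countable list"
  assumes "xs \<noteq> []" and "set xs \<subseteq> L"
  obtains x where "is_enumeration x L" and "map x [0..<length xs] = xs"
proof
  define n where "n = length xs"
  define x where
    "x i = (if i < n then xs ! i else if from_nat (i - n) \<in> L then from_nat (i - n) else hd xs)" for i
  have "map x [0..<n] = map ((!) xs) [0..<n]"
    by (rule map_cong) (simp_all add: x_def)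
  then show "map x [0..<length xs] = xs"
    by (simp add: n_def map_nth)
  have "range x \<subseteq> L"
    using assms by (auto simp: x_def n_def hd_in_set)
  moreover have "y \<in> range x" if "y \<in> L" for y
  proof
    show "y = x (to_nat y + n)"
      using that by (simp add: x_def)
  qed simp
  ultimately show "is_enumeration x L"
    unfolding is_enumeration_def by blast
qed

lemma large_gen_bound_beyond:
  fixes G :: "'a::countable list \<Rightarrow> 'a"
  assumes "infinite (UNIV :: 'a set)" and "finite W" and "W \<noteq> {}"
  obtains z where "z \<notin> W" and "\<And>T. gen_bound G (UNIV - {z}) T \<Longrightarrow> card W < T"
proof -
  obtain xs where xs: "set xs = W"
    using \<open>finite W\<close> finite_list by blast
  with \<open>W \<noteq> {}\<close> have "xs \<noteq> []" by auto
  obtain z where "z \<notin> W" and answer_wrong: "G xs \<in> W \<or> G xs = z"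
    \<comment> \<open>exclude the answer itself from the language, unless it was already seen\<close>
  proof (cases "G xs \<in> W")
    case True
    then show ?thesis
      using that ex_new_if_finite[OF assms(1,2)] by blast
  qed (use that in blast)
  obtain x where x: "is_enumeration x (UNIV - {z})" and prefix: "map x [0..<length xs] = xs"
    using is_enumeration_with_prefix[OF \<open>xs \<noteq> []\<close>, of "UNIV - {z}"] xs \<open>z \<notin> W\<close> by blast
  have seen: "x ` {..<length xs} = W"
    using arg_cong[OF prefix, of set] xs by (simp add: atLeast0LessThan)
  have "card W < T" if "gen_bound G (UNIV - {z}) T" for T
  proof (rule ccontr)
    assume "\<not> card W < T"
    then have "G xs \<in> (UNIV - {z}) - W"
      using that x prefix seen \<open>xs \<noteq> []\<close> unfolding gen_bound_def
      by (metis One_nat_def Suc_leI length_greater_0_conv not_less)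
    with answer_wrong show False by blast
  qed
  with \<open>z \<notin> W\<close> that show ?thesis by blast
qed

lemma gen_bound_redirected:
  fixes G :: "'a list \<Rightarrow> 'a" and tb :: "'a \<Rightarrow> nat"
  assumes bounds: "\<And>c. gen_bound G (UNIV - {c}) (tb c)"
    and pick: "\<And>S. finite S \<Longrightarrow> a \<notin> S \<Longrightarrow> pick S \<notin> insert a S \<and> card S < tb (pick S)"
  defines "G' \<equiv> \<lambda>xs. if a \<notin> set xs \<and> card (set xs) = tb a - 1 then pick (set xs) else G xs"
  shows "gen_bound G' (UNIV - {a}) (tb a - 1)"
    and "b \<noteq> a \<Longrightarrow> gen_bound G' (UNIV - {b}) (tb b)"
proof -
  have set_prefix: "set (map x [0..<t]) = x ` {..<t}" for x :: "nat \<Rightarrow> 'a" and t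
    by (auto simp: atLeast0LessThan)
  show "gen_bound G' (UNIV - {a}) (tb a - 1)"
    unfolding gen_bound_def
  proof (intro allI impI)
    fix x t
    assume x: "is_enumeration x (UNIV - {a})" and "1 \<le> t" and size: "tb a - 1 \<le> card (x ` {..<t})"
    have "a \<notin> x ` {..<t}"
      using x unfolding is_enumeration_def by auto
    moreover have "G (map x [0..<t]) \<in> UNIV - {a} - x ` {..<t}"
      if "card (x ` {..<t}) \<noteq> tb a - 1"
      using bounds[of a] x \<open>1 \<le> t\<close> size that unfolding gen_bound_def by auto
    ultimately show "G' (map x [0..<t]) \<in> UNIV - {a} - x ` {..<t}"
      using pick[of "x ` {..<t}"] unfolding G'_def set_prefix by auto
  qed
  assume "b \<noteq> a"
  show "gen_bound G' (UNIV - {b}) (tb b)"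
    unfolding gen_bound_def
  proof (intro allI impI)
    fix x t
    assume x: "is_enumeration x (UNIV - {b})" and "1 \<le> t" and size: "tb b \<le> card (x ` {..<t})"
    have "pick (x ` {..<t}) \<noteq> b" if "a \<notin> x ` {..<t}"
      using pick[of "x ` {..<t}"] size that by auto
    moreover have "G (map x [0..<t]) \<in> UNIV - {b} - x ` {..<t}"
      using bounds[of b] x \<open>1 \<le> t\<close> size unfolding gen_bound_def by blast
    ultimately show "G' (map x [0..<t]) \<in> UNIV - {b} - x ` {..<t}"
      using pick[of "x ` {..<t}"] unfolding G'_def set_prefix by auto
  qed
qed

lemma gen_bound_lowered_at:
  fixes G :: "'a::countable list \<Rightarrow> 'a" and tb :: "'a \<Rightarrow> nat"
  assumes "infinite (UNIV :: 'a set)" and bounds: "\<And>c. gen_bound G (UNIV - {c}) (tb c)"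
  obtains G' where "gen_bound G' (UNIV - {a}) (tb a - 1)"
    and "\<And>b. b \<noteq> a \<Longrightarrow> gen_bound G' (UNIV - {b}) (tb b)"
proof -
  define pick where "pick S = (SOME z. z \<notin> insert a S \<and> card S < tb z)" for S
  have "pick S \<notin> insert a S \<and> card S < tb (pick S)" if "finite S" "a \<notin> S" for S
  proof -
    obtain z where "z \<notin> insert a S" and "card (insert a S) < tb z"
      using large_gen_bound_beyond[OF assms(1), of "insert a S" G] bounds \<open>finite S\<close> by blast
    then have "\<exists>z. z \<notin> insert a S \<and> card S < tb z"
      using that by auto
    then show ?thesis
      unfolding pick_def by (rule someI_ex)
  qed
  from gen_bound_redirected[OF bounds this] that show ?thesis by blast
qed

lemma not_pareto_optimal_if_improved:
  assumes "nonuniform_generates G' Lf"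
    and "gen_time G' (Lf i) < gen_time G (Lf i)"
    and "\<And>j. j \<noteq> i \<Longrightarrow> gen_time G' (Lf j) \<le> gen_time G (Lf j)"
  shows "\<not> pareto_optimal Lf (\<lambda>k. gen_time G (Lf k))"
  using assms unfolding pareto_optimal_def by (meson leD)

theorem mainTheorem4:
  fixes idx :: "nat \<Rightarrow> int"
  assumes "bij idx"
  shows "\<not> (\<exists>G :: int list \<Rightarrow> int.
            nonuniform_generates G (\<lambda>k. UNIV - {idx k}) \<and>
            pareto_optimal (\<lambda>k. UNIV - {idx k}) (\<lambda>k. gen_time G (UNIV - {idx k})))"
proof clarify
  fix G :: "int list \<Rightarrow> int"
  assume generates: "nonuniform_generates G (\<lambda>k. UNIV - {idx k})"
    and optimal: "pareto_optimal (\<lambda>k. UNIV - {idx k}) (\<lambda>k. gen_time G (UNIV - {idx k}))"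
  have idx_onto: "c = idx (inv idx c)" for c
    using assms by (simp add: bij_is_surj surj_f_inv_f)
  have "\<exists>n. gen_time G (UNIV - {c}) = enat n \<and> gen_bound G (UNIV - {c}) n" for c
    using generates gen_time_attained unfolding nonuniform_generates_def by (metis idx_onto)
  then obtain tb where time: "\<And>c. gen_time G (UNIV - {c}) = enat (tb c)"
    and bounds: "\<And>c. gen_bound G (UNIV - {c}) (tb c)" by metis
  obtain a where "card {0 :: int} < tb a"
    using large_gen_bound_beyond[OF infinite_UNIV_int, of "{0}" G] bounds by blast
  then have "1 < tb a"
    by simp
  obtain G' where at_a: "gen_bound G' (UNIV - {a}) (tb a - 1)"
    and elsewhere: "\<And>b. b \<noteq> a \<Longrightarrow> gen_bound G' (UNIV - {b}) (tb b)"
    using gen_bound_lowered_at[OF infinite_UNIV_int bounds] by blast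
  have "nonuniform_generates G' (\<lambda>k. UNIV - {idx k})"
    unfolding nonuniform_generates_def
  proof
    show "\<exists>T. gen_bound G' (UNIV - {idx k}) T" for k
      by (cases "idx k = a") (use at_a elsewhere in auto)
  qed
  moreover have "gen_time G' (UNIV - {idx (inv idx a)}) < gen_time G (UNIV - {idx (inv idx a)})"
    using gen_time_le[OF at_a] time \<open>1 < tb a\<close> idx_onto[of a] by (simp add: order_le_less_trans)
  moreover have "gen_time G' (UNIV - {idx j}) \<le> gen_time G (UNIV - {idx j})" if "j \<noteq> inv idx a" for j
    using gen_time_le[OF elsewhere] time that assms by (metis bij_inv_eq_iff)
  ultimately show False
    using not_pareto_optimal_if_improved optimal by blast
qed

end
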